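(* For every dyadic strip $D\in\mathcal D$ and every dyadic tree $T\in\mathcal T$, $$\mu(D)=\sigma(D)=|\pi(D)|,\qquad \nu(T)=\tau(T)=|\pi(T)|,$$ where $\pi$ is the projection onto the first coordinate and $|\cdot|$ is Lebesgue measure. Moreover, for every $T\in\mathcal T$, $\nu(T)=|\pi(T)|=|\pi(D(T))|=\mu(D(T))$, where $D(T)=\pi(T)\times(0,|\pi(T)|]\times\mathbb R\in\mathcal D$.
   Context: Dyadic intervals: $I(m,l)=(2^lm,2^l(m+1)]$. Tiles: $H(m,l,n)=I(m,l)\times(2^{l-1},2^l]\times I(n,-l)$. Strips $D(m,l)=I(m,l)\times(0,2^l]\times\mathbb R$ form $\mathcal D$, with $\sigma(D(m,l))=2^l$. Trees $T(m,l,n)=\bigcup_{l'\le l}\bigcup_{m':\,I(m',l')\subseteq I(m,l)}H(m',l',N(n,l'))$, with $N(n,l')$ the integer such that $I(n,-l)\subseteq I(N(n,l'),-l')$, form $\mathcal T$, with $\tau(T(m,l,n))=2^l$. On $X=\mathbb R\times(0,\infty)\times\mathbb R$, $\mu(A)=\inf\{\sum_{S\in\mathcal S'}\sigma(S):\mathcal S'\subseteq\mathcal D,\ A\subseteq\bigcup\mathcal S'\}$ and $\nu(A)=\inf\{\sum_{S\in\mathcal S'}\tau(S):\mathcal S'\subseteq\mathcal T,\ A\subseteq\bigcup\mathcal S'\}$. *)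

theory Defs
  imports "HOL-Analysis.Analysis"
begin

type_synonym point = "real \<times> real \<times> real"

definition dyI :: "int \<Rightarrow> int \<Rightarrow> real set" where
  "dyI m l = {2 powr (real_of_int l) * real_of_int m <.. 2 powr (real_of_int l) * real_of_int (m + 1)}"

definition tile :: "int \<Rightarrow> int \<Rightarrow> int \<Rightarrow> point set" where
  "tile m l n = dyI m l \<times> ({2 powr (real_of_int (l - 1)) <.. 2 powr (real_of_int l)} \<times> dyI n (- l))"

definition strip :: "int \<Rightarrow> int \<Rightarrow> point set" where
  "strip m l = dyI m l \<times> ({0 <.. 2 powr (real_of_int l)} \<times> (UNIV :: real set))"

definition Nidx :: "int \<Rightarrow> int \<Rightarrow> int \<Rightarrow> int" where
  "Nidx n l l' = (THE N. dyI n (- l) \<subseteq> dyI N (- l'))"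

definition tree :: "int \<Rightarrow> int \<Rightarrow> int \<Rightarrow> point set" where
  "tree m l n = (\<Union>l'\<in>{l'. l' \<le> l}. \<Union>m'\<in>{m'. dyI m' l' \<subseteq> dyI m l}. tile m' l' (Nidx n l l'))"

definition strips :: "point set set" where
  "strips = {strip m l | m l. True}"

definition trees :: "point set set" where
  "trees = {tree m l n | m l n. True}"

text \<open>sigma(D(m,l)) = 2^l and tau(T(m,l,n)) = 2^l; collections of strips / trees
  are given by their (injective) parameter sets.\<close>
definition mu :: "point set \<Rightarrow> ennreal" where
  "mu A = (INF P \<in> {P :: (int \<times> int) set. A \<subseteq> (\<Union>(m, l)\<in>P. strip m l)}.
             \<Sum>\<^sub>\<infinity>(m, l)\<in>P. ennreal (2 powr (real_of_int l)))"

definition nu :: "point set \<Rightarrow> ennreal" where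
  "nu A = (INF P \<in> {P :: (int \<times> int \<times> int) set. A \<subseteq> (\<Union>(m, l, n)\<in>P. tree m l n)}.
             \<Sum>\<^sub>\<infinity>(m, l, n)\<in>P. ennreal (2 powr (real_of_int l)))"

definition proj :: "point set \<Rightarrow> real set" where
  "proj A = fst ` A"

definition stripOf :: "point set \<Rightarrow> point set" where
  "stripOf T = proj T \<times> ({0 <.. measure lborel (proj T)} \<times> (UNIV :: real set))"

end

theory Submission
  imports Defs
begin

text \<open>A strip or tree of scale \<open>2^l\<close> contains points at height \<open>2^l\<close> above every
  point of its base interval \<open>I(m,l)\<close>, whereas a strip or tree of scale \<open>2^l'\<close> lies
  below height \<open>2^l'\<close>. Hence every cover of it by strips (trees) has a member of weight
  at least \<open>2^l\<close>, and it covers itself. Its projection is \<open>I(m,l)\<close>, of length \<open>2^l\<close>,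
  so \<open>D(T)\<close> is the strip over the base interval of \<open>T\<close>.\<close>

definition cover_content :: "('p \<Rightarrow> 'a set) \<Rightarrow> ('p \<Rightarrow> ennreal) \<Rightarrow> 'a set \<Rightarrow> ennreal" where
  "cover_content S w A = (INF P \<in> {P. A \<subseteq> (\<Union>p\<in>P. S p)}. \<Sum>\<^sub>\<infinity>p\<in>P. w p)"

lemma mu_eq_cover_content:
  "mu = cover_content (\<lambda>(m, l). strip m l) (\<lambda>(m, l). ennreal (2 powr real_of_int l))"
  unfolding mu_def cover_content_def by (rule ext) (simp add: case_prod_beta')

lemma nu_eq_cover_content:
  "nu = cover_content (\<lambda>(m, l, n). tree m l n) (\<lambda>(m, l, n). ennreal (2 powr real_of_int l))"
  unfolding nu_def cover_content_def by (rule ext) (simp add: case_prod_beta')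

lemma ennreal_le_infsum:
  fixes f :: "'a \<Rightarrow> ennreal"
  assumes "a \<in> P"
  shows "f a \<le> infsum f P"
proof -
  have "infsum f {a} \<le> infsum f P"
    by (rule infsum_mono_neutral) (use assms in \<open>auto intro: nonneg_summable_on_complete\<close>)
  then show ?thesis by simp
qed

lemma cover_content_le:
  assumes "A \<subseteq> S p" and "w p \<le> c"
  shows "cover_content S w A \<le> c"
proof -
  have "cover_content S w A \<le> (\<Sum>\<^sub>\<infinity>q\<in>{p}. w q)"
    unfolding cover_content_def by (rule INF_lower) (use assms in auto)
  with assms(2) show ?thesis by simp
qed

lemma cover_content_ge:
  assumes "z \<in> A" and "\<And>p. z \<in> S p \<Longrightarrow> c \<le> w p"
  shows "c \<le> cover_content S w A"
  unfolding cover_content_def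
proof (rule INF_greatest)
  fix P assume "P \<in> {P. A \<subseteq> (\<Union>p\<in>P. S p)}"
  with \<open>z \<in> A\<close> obtain p where "p \<in> P" "z \<in> S p" by blast
  then show "c \<le> (\<Sum>\<^sub>\<infinity>p\<in>P. w p)"
    using assms(2) ennreal_le_infsum order_trans by metis
qed

lemma dyI_nonempty: "dyI m l \<noteq> {}"
  unfolding dyI_def by (auto simp: algebra_simps)

lemma emeasure_dyI: "emeasure lborel (dyI m l) = ennreal (2 powr real_of_int l)"
  unfolding dyI_def by (simp add: algebra_simps)

lemma measure_dyI: "measure lborel (dyI m l) = 2 powr real_of_int l"
  by (simp add: measure_def emeasure_dyI)

lemma height_le_strip:
  assumes "(x, h, y) \<in> strip m l"
  shows "h \<le> 2 powr real_of_int l"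
  using assms unfolding strip_def by auto

lemma height_le_tree:
  assumes "(x, h, y) \<in> tree m l n"
  shows "h \<le> 2 powr real_of_int l"
proof -
  from assms obtain l' m' where "l' \<le> l" and "(x, h, y) \<in> tile m' l' (Nidx n l l')"
    unfolding tree_def by blast
  then have "h \<le> 2 powr real_of_int l'" unfolding tile_def by auto
  also have "\<dots> \<le> 2 powr real_of_int l" using \<open>l' \<le> l\<close> by simp
  finally show ?thesis .
qed

lemma top_in_strip:
  assumes "x \<in> dyI m l"
  shows "(x, 2 powr real_of_int l, y) \<in> strip m l"
  using assms unfolding strip_def by auto

text \<open>Only the nonemptiness of \<open>I(Nidx n l l, -l)\<close> matters here, so the value
  of the definite description \<open>Nidx\<close> is never needed.\<close>

lemma top_in_tree:
  assumes "x \<in> dyI m l"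
  obtains y where "(x, 2 powr real_of_int l, y) \<in> tree m l n"
proof -
  obtain y where "y \<in> dyI (Nidx n l l) (- l)" using dyI_nonempty by blast
  with assms have "(x, 2 powr real_of_int l, y) \<in> tile m l (Nidx n l l)"
    unfolding tile_def by auto
  then show ?thesis using that unfolding tree_def by blast
qed

lemma proj_strip: "proj (strip m l) = dyI m l"
  unfolding proj_def strip_def by force

lemma proj_tree: "proj (tree m l n) = dyI m l"
proof
  show "proj (tree m l n) \<subseteq> dyI m l"
    unfolding proj_def tree_def tile_def by auto
  show "dyI m l \<subseteq> proj (tree m l n)"
    unfolding proj_def by (force elim: top_in_tree)
qed

lemma mu_strip: "mu (strip m l) = ennreal (2 powr real_of_int l)"
proof (rule antisym)
  show "mu (strip m l) \<le> ennreal (2 powr real_of_int l)"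
    unfolding mu_eq_cover_content by (rule cover_content_le[where p = "(m, l)"]) simp_all
  obtain x where "x \<in> dyI m l" using dyI_nonempty by blast
  then show "ennreal (2 powr real_of_int l) \<le> mu (strip m l)"
    unfolding mu_eq_cover_content
    by (intro cover_content_ge[OF top_in_strip]) (auto dest: height_le_strip)
qed

lemma nu_tree: "nu (tree m l n) = ennreal (2 powr real_of_int l)"
proof (rule antisym)
  show "nu (tree m l n) \<le> ennreal (2 powr real_of_int l)"
    unfolding nu_eq_cover_content by (rule cover_content_le[where p = "(m, l, n)"]) simp_all
  obtain x where "x \<in> dyI m l" using dyI_nonempty by blast
  then obtain y where "(x, 2 powr real_of_int l, y) \<in> tree m l n" by (rule top_in_tree)
  then show "ennreal (2 powr real_of_int l) \<le> nu (tree m l n)"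
    unfolding nu_eq_cover_content
    by (rule cover_content_ge) (auto dest: height_le_tree)
qed

lemma stripOf_tree: "stripOf (tree m l n) = strip m l"
  unfolding stripOf_def strip_def proj_tree measure_dyI ..

theorem lemma4p3:
  fixes m l n :: int
  shows "mu (strip m l) = ennreal (2 powr (real_of_int l))
       \<and> ennreal (2 powr (real_of_int l)) = emeasure lborel (proj (strip m l))
       \<and> nu (tree m l n) = ennreal (2 powr (real_of_int l))
       \<and> ennreal (2 powr (real_of_int l)) = emeasure lborel (proj (tree m l n))
       \<and> stripOf (tree m l n) \<in> strips
       \<and> nu (tree m l n) = emeasure lborel (proj (tree m l n))
       \<and> emeasure lborel (proj (tree m l n)) = emeasure lborel (proj (stripOf (tree m l n)))
       \<and> emeasure lborel (proj (stripOf (tree m l n))) = mu (stripOf (tree m l n))"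
  by (auto simp: mu_strip nu_tree proj_strip proj_tree emeasure_dyI stripOf_tree strips_def)

end
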